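(* Let $k$ be an integer such that either $k\ge 10$ and $k$ is even, or $k\equiv 0 \pmod 4$. Then $\chi_\rho(S^2_{C_k})=4$.
   Context: $C_k$ is the cycle with vertex set $[k]=\{0,\dots,k-1\}$ and edges $\{i,i+1\}$ (indices mod $k$). For a graph $G$ with vertex set $[k]$ and $n\ge 1$, the generalized Sierpi\'nski graph $S^n_G$ has vertex set $[k]^n$, and $u=u_1\cdots u_n$, $v=v_1\cdots v_n$ are adjacent iff there is $i$ with: $u_j=v_j$ for $j<i$; $u_i\neq v_i$ and $u_iv_i\in E(G)$; and $u_j=v_i$, $v_j=u_i$ for all $j>i$. A packing $c$-coloring of a graph $X$ is a map $f:V(X)\to\{1,\dots,c\}$ such that any two distinct vertices $u,v$ with $f(u)=f(v)=i$ satisfy $d_X(u,v)>i$; the packing chromatic number $\chi_\rho(X)$ is the least such $c$. *)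

theory Defs
  imports Main "HOL-Library.Extended_Nat"
begin

definition cycle_adj :: "nat \<Rightarrow> nat \<Rightarrow> nat \<Rightarrow> bool" where
  "cycle_adj k i j \<longleftrightarrow> i < k \<and> j < k \<and> i \<noteq> j \<and> (j = (i + 1) mod k \<or> i = (j + 1) mod k)"

text \<open>Generalized Sierpinski graph S^n_G for G on [k]; vertices are words of length n
  (lists, u ! 0 = u_1).\<close>
definition sierpinski_V :: "nat \<Rightarrow> nat \<Rightarrow> nat list set" where
  "sierpinski_V k n = {u. length u = n \<and> set u \<subseteq> {..<k}}"

definition sierpinski_adj :: "(nat \<Rightarrow> nat \<Rightarrow> bool) \<Rightarrow> nat list \<Rightarrow> nat list \<Rightarrow> bool" where
  "sierpinski_adj G u v \<longleftrightarrow> length u = length v \<and>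
     (\<exists>i < length u. (\<forall>j < i. u ! j = v ! j) \<and> u ! i \<noteq> v ! i \<and> G (u ! i) (v ! i) \<and>
        (\<forall>j. i < j \<and> j < length u \<longrightarrow> u ! j = v ! i \<and> v ! j = u ! i))"

definition walk :: "'a set \<Rightarrow> ('a \<Rightarrow> 'a \<Rightarrow> bool) \<Rightarrow> 'a list \<Rightarrow> bool" where
  "walk V E p \<longleftrightarrow> p \<noteq> [] \<and> set p \<subseteq> V \<and> (\<forall>i. Suc i < length p \<longrightarrow> E (p ! i) (p ! Suc i))"

text \<open>Graph distance (infinity if no walk exists).\<close>
definition gdist :: "'a set \<Rightarrow> ('a \<Rightarrow> 'a \<Rightarrow> bool) \<Rightarrow> 'a \<Rightarrow> 'a \<Rightarrow> enat" where
  "gdist V E u v = (INF p \<in> {p. walk V E p \<and> hd p = u \<and> last p = v}. enat (length p - 1))"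

definition packing_coloring :: "'a set \<Rightarrow> ('a \<Rightarrow> 'a \<Rightarrow> bool) \<Rightarrow> nat \<Rightarrow> ('a \<Rightarrow> nat) \<Rightarrow> bool" where
  "packing_coloring V E c f \<longleftrightarrow> (\<forall>v \<in> V. f v \<in> {1..c}) \<and>
     (\<forall>u \<in> V. \<forall>v \<in> V. u \<noteq> v \<and> f u = f v \<longrightarrow> gdist V E u v > enat (f u))"

definition packing_chromatic_number :: "'a set \<Rightarrow> ('a \<Rightarrow> 'a \<Rightarrow> bool) \<Rightarrow> nat" where
  "packing_chromatic_number V E = (LEAST c. \<exists>f. packing_coloring V E c f)"

end

theory Submission
  imports Defs
begin

text \<open>
  Write \<open>[a, b]\<close> for a vertex of \<open>S\<^sup>2\<close> of \<open>C\<^sub>k\<close>, i.e. vertex \<open>b\<close> of the copy \<open>a\<close> of \<open>C\<^sub>k\<close>;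
  copies \<open>a\<close> and \<open>a \<plusminus> 1\<close> are joined only by the bridge \<open>[a, a \<plusminus> 1] -- [a \<plusminus> 1, a]\<close>.
  Hence the shortest walk from \<open>[a, b]\<close> that visits only the copies \<open>a\<close>, \<open>a \<plusminus> 1\<close>, \<open>a \<plusminus> 2\<close>,
  truncated at 5, is a 1-Lipschitz potential and so a lower bound for the distance. For a
  coloring that depends only on the residue of \<open>a\<close> and on the offset \<open>b - a\<close>, the packing
  condition then reduces to finitely many integer checks. For \<open>4 dvd k\<close> we color each copy by
  the pattern 1, 2, 1, 3 in \<open>b\<close>, recoloring \<open>[a, a]\<close> with 4 for odd \<open>a\<close>; for \<open>k mod 4 = 2\<close>,
  \<open>k \<ge> 10\<close>, the pattern is broken near \<open>b = a\<close> and depends on the parity of \<open>a\<close>.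
  Conversely, the eight vertices \<open>[1, j]\<close>, \<open>[2, j]\<close> with \<open>j \<le> 3\<close> around the bridge
  \<open>[1, 2] -- [2, 1]\<close> admit no packing 3-coloring.
\<close>

section \<open>Walks, distance and packing colorings\<close>

lemma walk_singleton_iff [simp]: "walk V E [x] \<longleftrightarrow> x \<in> V"
  unfolding walk_def by auto

lemma walk_Cons_Cons_iff [simp]:
  "walk V E (x # y # ys) \<longleftrightarrow> x \<in> V \<and> E x y \<and> walk V E (y # ys)"
  unfolding walk_def by (auto simp: All_less_Suc2)

lemma gdist_le_walk_length:
  assumes "walk V E p"
  shows "gdist V E (hd p) (last p) \<le> enat (length p - 1)"
  unfolding gdist_def by (rule INF_lower) (use assms in auto)

lemma enat_le_gdist_if_potential:
  fixes \<phi> :: "'a \<Rightarrow> nat"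
  assumes "\<phi> u = 0"
    and step: "\<And>v w. v \<in> V \<Longrightarrow> w \<in> V \<Longrightarrow> E v w \<Longrightarrow> \<phi> w \<le> \<phi> v + 1"
  shows "enat (\<phi> v) \<le> gdist V E u v"
  unfolding gdist_def
proof (rule INF_greatest)
  fix p assume "p \<in> {p. walk V E p \<and> hd p = u \<and> last p = v}"
  then have p: "walk V E p" "hd p = u" "last p = v" by auto
  then have ne: "p \<noteq> []" and sub: "set p \<subseteq> V" unfolding walk_def by auto
  have bound: "\<phi> (p ! i) \<le> i" if "i < length p" for i
    using that
  proof (induction i)
    case 0
    then show ?case using p(2) ne \<open>\<phi> u = 0\<close> by (simp add: hd_conv_nth)
  next
    case (Suc i)
    have "E (p ! i) (p ! Suc i)" using p(1) Suc.prems unfolding walk_def by blast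
    then have "\<phi> (p ! Suc i) \<le> \<phi> (p ! i) + 1"
      using step sub Suc.prems by (meson Suc_lessD nth_mem subsetD)
    then show ?case using Suc by simp
  qed
  have "\<phi> v \<le> length p - 1"
    using bound[of "length p - 1"] p(3) ne by (simp add: last_conv_nth)
  then show "enat (\<phi> v) \<le> enat (length p - 1)" by simp
qed

lemma packing_coloring_if_potential:
  fixes \<phi> :: "'a \<Rightarrow> 'a \<Rightarrow> nat"
  assumes "\<And>v. v \<in> V \<Longrightarrow> f v \<in> {1..c}"
    and "\<And>u. \<phi> u u = 0"
    and "\<And>u v w. u \<in> V \<Longrightarrow> v \<in> V \<Longrightarrow> w \<in> V \<Longrightarrow> E v w \<Longrightarrow> \<phi> u w \<le> \<phi> u v + 1"
    and "\<And>u v. u \<in> V \<Longrightarrow> v \<in> V \<Longrightarrow> u \<noteq> v \<Longrightarrow> f u = f v \<Longrightarrow> f u < \<phi> u v"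
  shows "packing_coloring V E c f"
  unfolding packing_coloring_def
proof (intro conjI ballI impI)
  fix u v assume "u \<in> V" "v \<in> V" "u \<noteq> v \<and> f u = f v"
  then have "enat (f u) < enat (\<phi> u v)" using assms(4) by simp
  also have "\<dots> \<le> gdist V E u v"
    by (rule enat_le_gdist_if_potential) (use assms(2,3) \<open>u \<in> V\<close> in auto)
  finally show "enat (f u) < gdist V E u v" .
qed (use assms(1) in auto)

lemma packing_coloring_walk:
  assumes "packing_coloring V E c f" "walk V E p" "hd p \<noteq> last p" "f (hd p) = f (last p)"
  shows "f (hd p) < length p - 1"
proof -
  have "hd p \<in> V" "last p \<in> V" using assms(2) unfolding walk_def by auto
  then have "enat (f (hd p)) < gdist V E (hd p) (last p)"
    using assms(1,3,4) unfolding packing_coloring_def by auto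
  also have "\<dots> \<le> enat (length p - 1)" using gdist_le_walk_length[OF assms(2)] .
  finally show ?thesis by simp
qed

section \<open>Arithmetic on the cycle\<close>

definition cyc_succ :: "nat \<Rightarrow> nat \<Rightarrow> nat" where
  "cyc_succ k x = (if Suc x = k then 0 else Suc x)"

definition cyc_pred :: "nat \<Rightarrow> nat \<Rightarrow> nat" where
  "cyc_pred k x = (if x = 0 then k - 1 else x - 1)"

definition cyc_dist :: "nat \<Rightarrow> nat \<Rightarrow> nat \<Rightarrow> nat" where
  "cyc_dist k x y = (if x \<le> y then min (y - x) (k - (y - x)) else min (x - y) (k - (x - y)))"

lemma cyc_succ_less: "x < k \<Longrightarrow> cyc_succ k x < k"
  unfolding cyc_succ_def by auto

lemma cyc_pred_less: "x < k \<Longrightarrow> cyc_pred k x < k"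
  unfolding cyc_pred_def by auto

lemma cyc_pred_succ: "x < k \<Longrightarrow> cyc_pred k (cyc_succ k x) = x"
  unfolding cyc_succ_def cyc_pred_def by auto

lemma cyc_succ_pred: "x < k \<Longrightarrow> cyc_succ k (cyc_pred k x) = x"
  unfolding cyc_succ_def cyc_pred_def by auto

lemma cyc_succ_eq_mod: "x < k \<Longrightarrow> cyc_succ k x = (x + 1) mod k"
  unfolding cyc_succ_def by auto

lemma cyc_pred_eq_mod: "x < k \<Longrightarrow> cyc_pred k x = (x + (k - 1)) mod k"
  unfolding cyc_pred_def by (auto simp: mod_if)

lemma cycle_adj_iff:
  "cycle_adj k x y \<longleftrightarrow> x < k \<and> y < k \<and> x \<noteq> y \<and> (y = cyc_succ k x \<or> y = cyc_pred k x)"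
proof -
  have "x = cyc_succ k y \<longleftrightarrow> y = cyc_pred k x" if "x < k" "y < k"
    using that cyc_pred_succ cyc_succ_pred by metis
  then show ?thesis unfolding cycle_adj_def by (auto simp: cyc_succ_eq_mod)
qed

lemma cyc_dist_self [simp]: "cyc_dist k x x = 0"
  unfolding cyc_dist_def by simp

lemma cyc_dist_commute: "cyc_dist k x y = cyc_dist k y x"
  unfolding cyc_dist_def by auto

lemma cyc_dist_triangle:
  assumes "x < k" "y < k" "z < k"
  shows "cyc_dist k x z \<le> cyc_dist k x y + cyc_dist k y z"
proof -
  define d :: "nat \<Rightarrow> nat \<Rightarrow> nat" where "d u v = (if u \<le> v then v - u else u - v)" for u v
  have dist_d: "cyc_dist k u v = min (d u v) (k - d u v)" for u v
    unfolding cyc_dist_def d_def by simp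
  have "d x z \<le> d x y + d y z" "d y z \<le> d x y + d x z" "d x y \<le> d x z + d y z"
    "d x y + d y z + d x z \<le> 2 * k" "d x y < k" "d y z < k" "d x z < k"
    using assms unfolding d_def by auto
  moreover have "cyc_dist k x y = d x y \<or> cyc_dist k x y = k - d x y"
    "cyc_dist k y z = d y z \<or> cyc_dist k y z = k - d y z"
    "cyc_dist k x z \<le> d x z" "cyc_dist k x z \<le> k - d x z"
    by (simp_all add: dist_d min_def)
  ultimately show ?thesis by linarith
qed

lemma cyc_dist_eq_0_iff: "x < k \<Longrightarrow> y < k \<Longrightarrow> cyc_dist k x y = 0 \<longleftrightarrow> x = y"
  unfolding cyc_dist_def by (auto simp: min_def)

lemma cyc_dist_succ: "x < k \<Longrightarrow> cyc_dist k x (cyc_succ k x) \<le> 1"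
  unfolding cyc_dist_def cyc_succ_def by (auto simp: min_def)

lemma cyc_dist_pred: "x < k \<Longrightarrow> cyc_dist k x (cyc_pred k x) \<le> 1"
  unfolding cyc_dist_def cyc_pred_def by (auto simp: min_def)

lemma cyc_dist_succ_succ: "4 \<le> k \<Longrightarrow> x < k \<Longrightarrow> cyc_dist k x (cyc_succ k (cyc_succ k x)) = 2"
  unfolding cyc_dist_def cyc_succ_def by (auto simp: min_def)

lemma cyc_dist_pred_pred: "4 \<le> k \<Longrightarrow> x < k \<Longrightarrow> cyc_dist k x (cyc_pred k (cyc_pred k x)) = 2"
  unfolding cyc_dist_def cyc_pred_def by (auto simp: min_def)

lemma int_cyc_succ: "x < k \<Longrightarrow> int (cyc_succ k x) = (int x + 1) mod int k"
  by (simp add: cyc_succ_eq_mod of_nat_mod add.commute)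

lemma int_cyc_pred: "x < k \<Longrightarrow> int (cyc_pred k x) = (int x - 1) mod int k"
proof -
  assume "x < k"
  then have "int (x + (k - 1)) = (int x - 1) + int k" by (simp add: of_nat_diff)
  then show ?thesis using \<open>x < k\<close> by (simp only: cyc_pred_eq_mod of_nat_mod mod_add_self2)
qed

lemma cyc_neighbour_offset:
  assumes "x < k" "y = cyc_succ k x \<or> y = cyc_pred k x"
  obtains s where "\<bar>s\<bar> = 1" "int y = (int x + s) mod int k"
proof -
  have "int y = (int x + 1) mod int k \<or> int y = (int x + - 1) mod int k"
    using assms int_cyc_succ int_cyc_pred by auto
  then show ?thesis
  proof
    assume "int y = (int x + 1) mod int k"
    then show ?thesis by (rule that[rotated]) simp
  next
    assume "int y = (int x + - 1) mod int k"
    then show ?thesis by (rule that[rotated]) simp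
  qed
qed

lemma offset_eq_0_iff:
  assumes "x < k" "y < k" "int y = (int x + t) mod int k" "\<bar>t\<bar> < int k"
  shows "y = x \<longleftrightarrow> t = 0"
proof
  assume "y = x"
  then have "(int x + t) mod int k = (int x + 0) mod int k" using assms(1,3) by simp
  then have "int k dvd t" by (simp only: mod_eq_dvd_iff) simp
  show "t = 0"
  proof (rule ccontr)
    assume "t \<noteq> 0"
    then have "\<bar>int k\<bar> \<le> \<bar>t\<bar>" using dvd_imp_le_int \<open>int k dvd t\<close> by blast
    then show False using assms(4) by simp
  qed
qed (use assms in simp)

lemma int_mod_eq_imp_eq:
  fixes x y l m :: int
  assumes "x mod m = y mod m" "l \<le> x" "x < l + m" "l \<le> y" "y < l + m"
  shows "x = y"
proof -
  have "(x - l) mod m = (y - l) mod m" using assms(1) by (metis mod_diff_left_eq)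
  moreover have "(x - l) mod m = x - l" "(y - l) mod m = y - l"
    by (rule mod_pos_pos_trivial; use assms(2-5) in linarith)+
  ultimately show ?thesis by simp
qed

lemma cyc_dist_offset:
  assumes "x < k" "y < k"
  obtains i where "\<bar>i\<bar> = int (cyc_dist k x y)" "int y = (int x + i) mod int k"
proof -
  consider "x \<le> y" "y - x \<le> k - (y - x)" | "x \<le> y" "\<not> y - x \<le> k - (y - x)"
    | "\<not> x \<le> y" "x - y \<le> k - (x - y)" | "\<not> x \<le> y" "\<not> x - y \<le> k - (x - y)"
    by blast
  then show ?thesis
  proof cases
    case 1
    then show ?thesis using assms by (intro that[of "int y - int x"]) (auto simp: cyc_dist_def)
  next
    case 2
    have "int y = (int x + (int y - int x - int k)) mod int k"
      using assms by (simp add: mod_diff_right_eq[symmetric])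
    then show ?thesis
      using 2 assms by (intro that[of "int y - int x - int k"]) (auto simp: cyc_dist_def)
  next
    case 3
    then show ?thesis using assms by (intro that[of "int y - int x"]) (auto simp: cyc_dist_def)
  next
    case 4
    have "int y = (int x + (int y - int x + int k)) mod int k" using assms by simp
    then show ?thesis
      using 4 assms by (intro that[of "int y - int x + int k"]) (auto simp: cyc_dist_def)
  qed
qed

lemma cong_offset_mod:
  assumes "m dvd k" "int y = (int x + t) mod int k"
  shows "int y mod int m = (int x + t) mod int m"
  using assms by (simp add: mod_mod_cancel)

lemma odd_iff_even_neighbour:
  assumes "even k" "int a' = (int a + s) mod int k" "\<bar>s\<bar> = 1"
  shows "odd a' \<longleftrightarrow> even a"
proof -
  have "int a' mod 2 = (int a + s) mod 2"
    using assms(1,2) by (metis even_of_nat mod_mod_cancel)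
  moreover have "s = 1 \<or> s = -1" using assms(3) by linarith
  ultimately show ?thesis by presburger
qed

section \<open>The graph \<open>S\<^sup>2\<close> of a cycle and a lower bound for its distance\<close>

lemma sierpinski_V_2_iff: "u \<in> sierpinski_V k 2 \<longleftrightarrow> (\<exists>a b. u = [a, b] \<and> a < k \<and> b < k)"
proof
  assume "u \<in> sierpinski_V k 2"
  then have "length u = 2" "set u \<subseteq> {..<k}" unfolding sierpinski_V_def by auto
  then show "\<exists>a b. u = [a, b] \<and> a < k \<and> b < k"
    by (auto simp: numeral_2_eq_2 length_Suc_conv)
qed (auto simp: sierpinski_V_def)

lemma sierpinski_adj_pair_iff:
  "sierpinski_adj G [a, b] [a', b'] \<longleftrightarrow>
     (a = a' \<and> b \<noteq> b' \<and> G b b') \<or> (a \<noteq> a' \<and> G a a' \<and> b = a' \<and> b' = a)"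
proof -
  have "(\<exists>i<Suc (Suc 0). P i) \<longleftrightarrow> P 0 \<or> P 1" for P
    by (auto simp: less_Suc_eq)
  moreover have "\<exists>j>0. j < Suc (Suc 0)" "\<not> (\<exists>j>Suc 0. j < Suc (Suc 0))"
    by auto
  ultimately show ?thesis
    unfolding sierpinski_adj_def by simp blast
qed

lemma sier2_adj_iff:
  "sierpinski_adj (cycle_adj k) [a, b] [a', b'] \<longleftrightarrow>
     (a = a' \<and> cycle_adj k b b') \<or> (cycle_adj k a a' \<and> b = a' \<and> b' = a)"
proof -
  have "cycle_adj k x y \<Longrightarrow> x \<noteq> y" for x y by (simp add: cycle_adj_def)
  then show ?thesis unfolding sierpinski_adj_pair_iff by blast
qed

lemma sier2_adj_sym:
  "sierpinski_adj (cycle_adj k) u v \<Longrightarrow> sierpinski_adj (cycle_adj k) v u"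
  unfolding sierpinski_adj_def cycle_adj_def by (metis nat_neq_iff)

text \<open>
  A walk from copy \<open>a\<close> to copy \<open>a \<plusminus> 2\<close> crosses copy \<open>a \<plusminus> 1\<close> from \<open>[a \<plusminus> 1, a]\<close> to
  \<open>[a \<plusminus> 1, a \<plusminus> 2]\<close>, which costs two steps besides the two bridges: hence the constant 4.
\<close>

definition sier2_dist_bound :: "nat \<Rightarrow> nat \<Rightarrow> nat \<Rightarrow> nat \<Rightarrow> nat \<Rightarrow> nat" where
  "sier2_dist_bound k a b a' b' = min 5
     (min (if a' = a then cyc_dist k b b' else 5)
     (min (if a' = cyc_succ k a \<or> a' = cyc_pred k a
           then cyc_dist k b a' + 1 + cyc_dist k a b' else 5)
     (min (if a' = cyc_succ k (cyc_succ k a)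
           then cyc_dist k b (cyc_succ k a) + 4 + cyc_dist k (cyc_succ k a) b' else 5)
          (if a' = cyc_pred k (cyc_pred k a)
           then cyc_dist k b (cyc_pred k a) + 4 + cyc_dist k (cyc_pred k a) b' else 5))))"

lemma sier2_dist_bound_le_5: "sier2_dist_bound k a b a' b' \<le> 5"
  unfolding sier2_dist_bound_def by (rule min.cobounded1)

lemma sier2_dist_bound_le_same_copy:
  "sier2_dist_bound k a b a b' \<le> cyc_dist k b b'"
  unfolding sier2_dist_bound_def min_le_iff_disj by simp

lemma sier2_dist_bound_self [simp]: "sier2_dist_bound k a b a b = 0"
  using sier2_dist_bound_le_same_copy[of k a b b] by simp

lemma sier2_dist_bound_le_next_copy:
  "a' = cyc_succ k a \<or> a' = cyc_pred k a \<Longrightarrow>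
    sier2_dist_bound k a b a' b' \<le> cyc_dist k b a' + 1 + cyc_dist k a b'"
  unfolding sier2_dist_bound_def min_le_iff_disj by (simp split del: if_split)

lemma sier2_dist_bound_le_second_succ:
  "sier2_dist_bound k a b (cyc_succ k (cyc_succ k a)) b' \<le>
    cyc_dist k b (cyc_succ k a) + 4 + cyc_dist k (cyc_succ k a) b'"
  unfolding sier2_dist_bound_def min_le_iff_disj by (simp split del: if_split)

lemma sier2_dist_bound_le_second_pred:
  "sier2_dist_bound k a b (cyc_pred k (cyc_pred k a)) b' \<le>
    cyc_dist k b (cyc_pred k a) + 4 + cyc_dist k (cyc_pred k a) b'"
  unfolding sier2_dist_bound_def min_le_iff_disj by (simp split del: if_split)

lemma le_sier2_dist_boundI:
  assumes "c \<le> 5"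
    and "a' = a \<Longrightarrow> c \<le> cyc_dist k b b'"
    and "a' = cyc_succ k a \<or> a' = cyc_pred k a \<Longrightarrow> c \<le> cyc_dist k b a' + 1 + cyc_dist k a b'"
    and "a' = cyc_succ k (cyc_succ k a) \<Longrightarrow>
      c \<le> cyc_dist k b (cyc_succ k a) + 4 + cyc_dist k (cyc_succ k a) b'"
    and "a' = cyc_pred k (cyc_pred k a) \<Longrightarrow>
      c \<le> cyc_dist k b (cyc_pred k a) + 4 + cyc_dist k (cyc_pred k a) b'"
  shows "c \<le> sier2_dist_bound k a b a' b'"
  unfolding sier2_dist_bound_def min.bounded_iff using assms by (intro conjI) simp_all

lemma sier2_dist_bound_step:
  assumes k: "4 \<le> k" and lt: "a < k" "b < k" "a1 < k" "b1 < k" "a2 < k" "b2 < k"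
    and edge: "sierpinski_adj (cycle_adj k) [a1, b1] [a2, b2]"
  shows "sier2_dist_bound k a b a2 b2 \<le> sier2_dist_bound k a b a1 b1 + 1"
proof -
  let ?\<delta> = "sier2_dist_bound k a b"
  have edge_cases: "a2 = a1 \<and> cyc_dist k b1 b2 \<le> 1
      \<or> (a2 = cyc_succ k a1 \<or> a2 = cyc_pred k a1) \<and> b1 = a2 \<and> b2 = a1"
    using edge cyc_dist_succ[of b1 k] cyc_dist_pred[of b1 k] lt
    unfolding sier2_adj_iff cycle_adj_iff by auto
  have same_copy: "?\<delta> a2 b2 \<le> cyc_dist k b b1 + 1" if "a1 = a"
    using edge_cases
  proof
    assume "a2 = a1 \<and> cyc_dist k b1 b2 \<le> 1"
    then show ?thesis
      using that sier2_dist_bound_le_same_copy[of k a b b2] cyc_dist_triangle[of b k b1 b2] lt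
      by auto
  next
    assume "(a2 = cyc_succ k a1 \<or> a2 = cyc_pred k a1) \<and> b1 = a2 \<and> b2 = a1"
    then show ?thesis using that sier2_dist_bound_le_next_copy[of a2 k a b b2] by auto
  qed
  have next_copy: "?\<delta> a2 b2 \<le> cyc_dist k b a1 + 1 + cyc_dist k a b1 + 1"
    if a1: "a1 = cyc_succ k a \<or> a1 = cyc_pred k a"
    using edge_cases
  proof
    assume "a2 = a1 \<and> cyc_dist k b1 b2 \<le> 1"
    then show ?thesis
      using a1 sier2_dist_bound_le_next_copy[of a2 k a b b2] cyc_dist_triangle[of a k b1 b2] lt
      by auto
  next
    assume bridge: "(a2 = cyc_succ k a1 \<or> a2 = cyc_pred k a1) \<and> b1 = a2 \<and> b2 = a1"
    consider "a2 = a" | "a1 = cyc_succ k a" "a2 = cyc_succ k (cyc_succ k a)"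
      | "a1 = cyc_pred k a" "a2 = cyc_pred k (cyc_pred k a)"
      using a1 bridge cyc_pred_succ[OF lt(1)] cyc_succ_pred[OF lt(1)] by auto
    then show ?thesis
    proof cases
      case 1
      then show ?thesis using bridge sier2_dist_bound_le_same_copy[of k a b b2] by auto
    next
      case 2
      then show ?thesis
        using bridge sier2_dist_bound_le_second_succ[of k a b b2] cyc_dist_succ_succ[OF k lt(1)]
        by auto
    next
      case 3
      then show ?thesis
        using bridge sier2_dist_bound_le_second_pred[of k a b b2] cyc_dist_pred_pred[OF k lt(1)]
        by auto
    qed
  qed
  have "?\<delta> a2 b2 - 1 \<le> ?\<delta> a1 b1"
    using same_copy next_copy sier2_dist_bound_le_5[of k a b a2 b2]
    by (intro le_sier2_dist_boundI) auto
  then show ?thesis by linarith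
qed

section \<open>Packing colorings from local conditions\<close>

text \<open>
  The conditions \<open>same_copy\<close>, \<open>next_copy\<close> and \<open>bridge_end\<close> match the terms of
  \<^const>\<open>sier2_dist_bound\<close> for \<open>a' = a\<close>, \<open>a' = a \<plusminus> 1\<close> and \<open>a' = a \<plusminus> 2\<close>; \<open>i\<close> and \<open>j\<close> are
  offsets realising cycle distances, which only matter up to 4 because no color exceeds 4.
\<close>

locale sier2_local_coloring =
  fixes k :: nat and g :: "nat \<Rightarrow> nat \<Rightarrow> nat"
  assumes k: "4 \<le> k"
    and color_range: "\<And>a b. g a b \<in> {1..4}"
    and same_copy: "\<And>a b b' i. a < k \<Longrightarrow> b < k \<Longrightarrow> b' < k \<Longrightarrow> b' \<noteq> b \<Longrightarrow>
      int b' = (int b + i) mod int k \<Longrightarrow> \<bar>i\<bar> \<le> 4 \<Longrightarrow> g a b = g a b' \<Longrightarrow>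
      int (g a b) < \<bar>i\<bar>"
    and next_copy: "\<And>a a' b b' s i j. a < k \<Longrightarrow> a' < k \<Longrightarrow> b < k \<Longrightarrow> b' < k \<Longrightarrow>
      \<bar>s\<bar> = 1 \<Longrightarrow> int a' = (int a + s) mod int k \<Longrightarrow>
      int b = (int a + (s + i)) mod int k \<Longrightarrow> int b' = (int a' + (j - s)) mod int k \<Longrightarrow>
      \<bar>i\<bar> + \<bar>j\<bar> \<le> 3 \<Longrightarrow> g a b = g a' b' \<Longrightarrow> int (g a b) < \<bar>i\<bar> + 1 + \<bar>j\<bar>"
    and bridge_end: "\<And>a. a < k \<Longrightarrow> g a (cyc_succ k a) \<le> 3 \<and> g a (cyc_pred k a) \<le> 3"
begin

lemma less_sier2_dist_bound:
  assumes lt: "a < k" "b < k" "a' < k" "b' < k"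
    and ne: "[a, b] \<noteq> [a', b']" and eq: "g a b = g a' b'"
  shows "g a b < sier2_dist_bound k a b a' b'"
proof -
  have le4: "g a b \<le> 4" using color_range[of a b] by simp
  have "Suc (g a b) \<le> sier2_dist_bound k a b a' b'"
  proof (rule le_sier2_dist_boundI)
    show "Suc (g a b) \<le> 5" using le4 by simp
  next
    assume "a' = a"
    then have "b \<noteq> b'" using ne by simp
    obtain i where i: "\<bar>i\<bar> = int (cyc_dist k b b')" "int b' = (int b + i) mod int k"
      using cyc_dist_offset lt(2,4) by blast
    show "Suc (g a b) \<le> cyc_dist k b b'"
      using same_copy[OF lt(1,2,4) not_sym[OF \<open>b \<noteq> b'\<close>] i(2)] eq \<open>a' = a\<close> i(1) le4
      by (cases "\<bar>i\<bar> \<le> 4") auto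
  next
    assume "a' = cyc_succ k a \<or> a' = cyc_pred k a"
    then obtain s where s: "\<bar>s\<bar> = 1" "int a' = (int a + s) mod int k"
      using cyc_neighbour_offset lt(1) by blast
    obtain i where i: "\<bar>i\<bar> = int (cyc_dist k a' b)" "int b = (int a' + i) mod int k"
      using cyc_dist_offset lt(3,2) by blast
    obtain j where j: "\<bar>j\<bar> = int (cyc_dist k a b')" "int b' = (int a + j) mod int k"
      using cyc_dist_offset lt(1,4) by blast
    have b: "int b = (int a + (s + i)) mod int k"
      using i(2) s(2) by (simp add: mod_add_left_eq add.assoc)
    have b': "int b' = (int a' + (j - s)) mod int k"
      using j(2) s(2) by (simp add: mod_add_left_eq)
    show "Suc (g a b) \<le> cyc_dist k b a' + 1 + cyc_dist k a b'"
      using next_copy[OF lt(1,3,2,4) s b b' _ eq] i(1) j(1) le4 cyc_dist_commute[of k a' b]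
      by (cases "\<bar>i\<bar> + \<bar>j\<bar> \<le> 3") auto
  next
    have "cyc_dist k b (cyc_succ k a) = 0 \<longleftrightarrow> b = cyc_succ k a"
      using cyc_dist_eq_0_iff[OF lt(2) cyc_succ_less[OF lt(1)]] .
    then show "Suc (g a b) \<le> cyc_dist k b (cyc_succ k a) + 4 + cyc_dist k (cyc_succ k a) b'"
      using bridge_end[OF lt(1)] le4 by (cases "b = cyc_succ k a") auto
  next
    have "cyc_dist k b (cyc_pred k a) = 0 \<longleftrightarrow> b = cyc_pred k a"
      using cyc_dist_eq_0_iff[OF lt(2) cyc_pred_less[OF lt(1)]] .
    then show "Suc (g a b) \<le> cyc_dist k b (cyc_pred k a) + 4 + cyc_dist k (cyc_pred k a) b'"
      using bridge_end[OF lt(1)] le4 by (cases "b = cyc_pred k a") auto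
  qed
  then show ?thesis by simp
qed

lemma packing_4_coloring:
  "packing_coloring (sierpinski_V k 2) (sierpinski_adj (cycle_adj k)) 4 (\<lambda>u. g (u ! 0) (u ! 1))"
proof (rule packing_coloring_if_potential)
  let ?\<phi> = "\<lambda>u v. sier2_dist_bound k (u ! 0) (u ! 1) (v ! 0) (v ! 1)"
  show "?\<phi> u u = 0" for u by simp
  show "?\<phi> u w \<le> ?\<phi> u v + 1"
    if uvw: "u \<in> sierpinski_V k 2" "v \<in> sierpinski_V k 2" "w \<in> sierpinski_V k 2"
      and edge: "sierpinski_adj (cycle_adj k) v w" for u v w
  proof -
    obtain a b a1 b1 a2 b2 where "u = [a, b]" "v = [a1, b1]" "w = [a2, b2]"
      "a < k" "b < k" "a1 < k" "b1 < k" "a2 < k" "b2 < k"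
      using uvw unfolding sierpinski_V_2_iff by blast
    then show ?thesis using sier2_dist_bound_step[OF k] edge by simp
  qed
  show "g (u ! 0) (u ! 1) < ?\<phi> u v"
    if uv: "u \<in> sierpinski_V k 2" "v \<in> sierpinski_V k 2" "u \<noteq> v"
      and eq: "g (u ! 0) (u ! 1) = g (v ! 0) (v ! 1)"
    for u v
  proof -
    obtain a b a' b' where "u = [a, b]" "v = [a', b']" "a < k" "b < k" "a' < k" "b' < k"
      using uv(1,2) unfolding sierpinski_V_2_iff by blast
    then show ?thesis using less_sier2_dist_bound uv(3) eq by simp
  qed
qed (use color_range in auto)

end

section \<open>The coloring for \<open>4 dvd k\<close>\<close>

definition pattern_1213 :: "int \<Rightarrow> nat" where
  "pattern_1213 x = (if x mod 4 = 1 then 2 else if x mod 4 = 3 then 3 else 1)"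

lemma pattern_1213_range: "pattern_1213 x \<in> {1..3}"
  unfolding pattern_1213_def by simp

lemma pattern_1213_cong: "x mod 4 = y mod 4 \<Longrightarrow> pattern_1213 x = pattern_1213 y"
  unfolding pattern_1213_def by simp

lemma pattern_1213_separated:
  assumes eq: "pattern_1213 x = pattern_1213 y" and "x \<noteq> y"
  shows "int (pattern_1213 x) < \<bar>x - y\<bar>"
proof (cases "\<bar>x - y\<bar> \<le> 3")
  case True
  define r d where "r = x mod 4" and "d = y - x"
  have "pattern_1213 r = pattern_1213 (r + d)"
    using eq pattern_1213_cong[of x r] pattern_1213_cong[of y "r + d"]
    unfolding r_def d_def by (simp add: mod_add_left_eq)
  moreover have "r = 0 \<or> r = 1 \<or> r = 2 \<or> r = 3" unfolding r_def by presburger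
  moreover have "d = -3 \<or> d = -2 \<or> d = -1 \<or> d = 1 \<or> d = 2 \<or> d = 3"
    using True \<open>x \<noteq> y\<close> unfolding d_def by linarith
  ultimately have "int (pattern_1213 r) < \<bar>d\<bar>"
    by (elim disjE) (simp_all add: pattern_1213_def)
  then show ?thesis
    using pattern_1213_cong[of x r] unfolding r_def d_def by (simp add: abs_minus_commute)
next
  case False
  then show ?thesis using pattern_1213_range[of x] by simp
qed

definition color_A :: "nat \<Rightarrow> nat \<Rightarrow> nat" where
  "color_A a b = (if odd a \<and> a = b then 4 else pattern_1213 (int b))"

definition pattern_A :: "int \<Rightarrow> int \<Rightarrow> nat" where
  "pattern_A a t = (if odd a \<and> t = 0 then 4 else pattern_1213 (a + t))"

lemma pattern_A_cong: "a mod 4 = a' mod 4 \<Longrightarrow> pattern_A a t = pattern_A a' t"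
proof -
  assume "a mod 4 = a' mod 4"
  moreover have "(2::int) dvd 4" by simp
  ultimately have "a mod 2 = a' mod 2" by (metis mod_mod_cancel)
  then have "odd a \<longleftrightarrow> odd a'" by (simp add: even_iff_mod_2_eq_zero)
  moreover have "(a + t) mod 4 = (a' + t) mod 4"
    using \<open>a mod 4 = a' mod 4\<close> by (metis mod_add_left_eq)
  then have "pattern_1213 (a + t) = pattern_1213 (a' + t)" by (rule pattern_1213_cong)
  ultimately show ?thesis unfolding pattern_A_def by simp
qed

lemma color_A_offset:
  assumes "4 dvd k" "a < k" "b < k" "int b = (int a + t) mod int k" "\<bar>t\<bar> < int k"
  shows "color_A a b = pattern_A (int a) t"
proof -
  have "b = a \<longleftrightarrow> t = 0" using offset_eq_0_iff assms(2-5) by blast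
  moreover have "pattern_1213 (int b) = pattern_1213 (int a + t)"
    using cong_offset_mod[of 4 k b a t] assms(1,4) by (intro pattern_1213_cong) simp
  ultimately show ?thesis unfolding color_A_def pattern_A_def by auto
qed

lemma pattern_A_next_copy:
  assumes "\<bar>s\<bar> = 1" "\<bar>i\<bar> + \<bar>j\<bar> \<le> 2" and eq: "pattern_A a (s + i) = pattern_A (a + s) (j - s)"
  shows "int (pattern_A a (s + i)) < \<bar>i\<bar> + 1 + \<bar>j\<bar>"
proof -
  define r where "r = a mod 4"
  have "pattern_A a (s + i) = pattern_A r (s + i)"
    "pattern_A (a + s) (j - s) = pattern_A (r + s) (j - s)"
    unfolding r_def by (auto intro: pattern_A_cong simp: mod_add_left_eq)
  moreover have "r = 0 \<or> r = 1 \<or> r = 2 \<or> r = 3" unfolding r_def by presburger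
  moreover have "s = -1 \<or> s = 1" using assms(1) by linarith
  moreover have "i = -2 \<or> i = -1 \<or> i = 0 \<or> i = 1 \<or> i = 2" "j = -2 \<or> j = -1 \<or> j = 0 \<or> j = 1 \<or> j = 2"
    using assms(2) by linarith+
  ultimately show ?thesis using eq assms(2)
    by (elim disjE) (simp_all add: pattern_A_def pattern_1213_def)
qed

lemma sier2_local_coloring_A:
  assumes k: "4 \<le> k" and "4 dvd k"
  shows "sier2_local_coloring k color_A"
proof
  show "4 \<le> k" using k .
  have "even k" using assms(2) by (metis dvd_trans even_numeral)
  show "color_A a b \<in> {1..4}" for a b
    using pattern_1213_range[of "int b"] unfolding color_A_def by auto
  show "int (color_A a b) < \<bar>i\<bar>"
    if "a < k" "b < k" "b' < k" "b' \<noteq> b" and b': "int b' = (int b + i) mod int k"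
      and "\<bar>i\<bar> \<le> 4" and eq: "color_A a b = color_A a b'" for a b b' i
  proof -
    have "i \<noteq> 0" using b' \<open>b < k\<close> \<open>b' \<noteq> b\<close> by auto
    have "color_A a b = pattern_1213 (int b)" "color_A a b' = pattern_1213 (int b')"
      using eq \<open>b' \<noteq> b\<close> pattern_1213_range[of "int b"] pattern_1213_range[of "int b'"]
      unfolding color_A_def by (auto split: if_splits)
    moreover have "pattern_1213 (int b') = pattern_1213 (int b + i)"
      using cong_offset_mod[of 4 k b' b i] assms(2) b' by (intro pattern_1213_cong) simp
    ultimately have "color_A a b = pattern_1213 (int b)" "color_A a b' = pattern_1213 (int b + i)"
      by simp_all
    then show ?thesis using pattern_1213_separated[of "int b" "int b + i"] eq \<open>i \<noteq> 0\<close> by simp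
  qed
  show "int (color_A a b) < \<bar>i\<bar> + 1 + \<bar>j\<bar>"
    if lt: "a < k" "a' < k" "b < k" "b' < k" and s: "\<bar>s\<bar> = 1" "int a' = (int a + s) mod int k"
      and b: "int b = (int a + (s + i)) mod int k" and b': "int b' = (int a' + (j - s)) mod int k"
      and "\<bar>i\<bar> + \<bar>j\<bar> \<le> 3" and eq: "color_A a b = color_A a' b'" for a a' b b' s i j
  proof -
    have "color_A a b \<le> 3"
      using eq odd_iff_even_neighbour[OF \<open>even k\<close> s(2,1)] pattern_1213_range[of "int b"]
        pattern_1213_range[of "int b'"]
      unfolding color_A_def by (auto split: if_splits)
    moreover have "int (color_A a b) < \<bar>i\<bar> + 1 + \<bar>j\<bar>" if "\<bar>i\<bar> + \<bar>j\<bar> \<le> 2"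
    proof -
      have ab: "color_A a b = pattern_A (int a) (s + i)"
        using color_A_offset[OF assms(2) lt(1,3) b] that s(1) k by linarith
      have "color_A a' b' = pattern_A (int a + s) (j - s)"
        using color_A_offset[OF assms(2) lt(2,4) b'] that s(1) k
          pattern_A_cong[of "int a'" "int a + s"] cong_offset_mod[of 4 k a' a s] assms(2) s(2)
        by simp
      then have "pattern_A (int a) (s + i) = pattern_A (int a + s) (j - s)" using ab eq by simp
      then show ?thesis using pattern_A_next_copy[OF s(1) that] ab by simp
    qed
    ultimately show ?thesis by linarith
  qed
  show "color_A a (cyc_succ k a) \<le> 3 \<and> color_A a (cyc_pred k a) \<le> 3" if "a < k" for a
    using pattern_1213_range that k unfolding color_A_def cyc_succ_def cyc_pred_def
    by (auto simp: less_eq_Suc_le)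
qed

section \<open>The coloring for \<open>k mod 4 = 2\<close>\<close>

definition pattern_B :: "bool \<Rightarrow> int \<Rightarrow> nat" where
  "pattern_B odd_copy t =
    (if odd_copy then
       if t = 0 then 4 else if t > 0 then pattern_1213 (t + 3) else pattern_1213 (t + 1)
     else if t \<ge> 0 then pattern_1213 t
     else if t = -4 then 4 else if t = -3 then 1 else if t = -2 then 2 else if t = -1 then 3
     else pattern_1213 (t + 2))"

text \<open>
  The branches of \<^const>\<open>pattern_B\<close> for \<open>t \<le> -5\<close> continue the pattern so that it is
  invariant under \<open>t \<mapsto> t - k\<close> when \<open>k mod 4 = 2\<close>; then any offset in \<open>(-k, k - 4)\<close> may be used.
\<close>

definition color_B :: "nat \<Rightarrow> nat \<Rightarrow> nat \<Rightarrow> nat" where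
  "color_B k a b = pattern_B (odd a) ((int b - int a + 4) mod int k - 4)"

lemma pattern_B_range: "pattern_B p t \<in> {1..4}"
  using pattern_1213_range[of "t + 3"] pattern_1213_range[of "t + 1"] pattern_1213_range[of t]
    pattern_1213_range[of "t + 2"]
  unfolding pattern_B_def by auto

lemma pattern_B_pos: "1 \<le> t \<Longrightarrow> pattern_B p t = pattern_1213 (t + (if p then 3 else 0))"
  unfolding pattern_B_def by simp

lemma pattern_B_neg: "t \<le> -5 \<Longrightarrow> pattern_B p t = pattern_1213 (t + (if p then 1 else 2))"
  unfolding pattern_B_def by simp

lemma pattern_B_minus_k:
  assumes "k mod 4 = 2" "1 \<le> t" "t - int k \<le> -5"
  shows "pattern_B p (t - int k) = pattern_B p t"
proof -
  have "int k mod 4 = 2" using assms(1) by presburger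
  then have "(t - int k + 1) mod 4 = (t + 3) mod 4" "(t - int k + 2) mod 4 = t mod 4"
    by presburger+
  then show ?thesis
    using assms(2,3) pattern_1213_cong[of "t - int k + 1"] pattern_1213_cong[of "t - int k + 2"]
    by (cases p) (simp_all add: pattern_B_pos pattern_B_neg)
qed

lemma color_B_offset:
  assumes "k mod 4 = 2" "int b = (int a + t) mod int k" "- int k < t" "t < int k - 4"
  shows "color_B k a b = pattern_B (odd a) t"
proof -
  define t\<^sub>0 where "t\<^sub>0 = (int b - int a + 4) mod int k - 4"
  have k: "int k > 0" using assms(3,4) by linarith
  have "t\<^sub>0 mod int k = (int b - int a) mod int k"
    unfolding t\<^sub>0_def by (simp add: mod_diff_left_eq)
  also have "\<dots> = t mod int k" using assms(2) by (simp add: mod_diff_left_eq)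
  finally have cong: "t\<^sub>0 mod int k = t mod int k" .
  have t\<^sub>0: "-4 \<le> t\<^sub>0" "t\<^sub>0 < -4 + int k" unfolding t\<^sub>0_def using k by simp_all
  show ?thesis
  proof (cases "-4 \<le> t")
    case True
    then have "t\<^sub>0 = t" using int_mod_eq_imp_eq[OF cong t\<^sub>0] assms(4) by simp
    then show ?thesis unfolding color_B_def t\<^sub>0_def by simp
  next
    case False
    have "t\<^sub>0 = t + int k"
      by (rule int_mod_eq_imp_eq[where l = "-4" and m = "int k"])
        (use cong t\<^sub>0 assms(3) False in simp_all)
    then have "pattern_B (odd a) t = pattern_B (odd a) t\<^sub>0"
      using pattern_B_minus_k[OF assms(1), of t\<^sub>0] False assms(3) by simp
    then show ?thesis unfolding color_B_def t\<^sub>0_def by simp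
  qed
qed

lemma exists_offset_in_window:
  assumes "9 \<le> k" "\<bar>i\<bar> \<le> 4"
  obtains t where "t mod int k = x mod int k" "- int k < t" "t < int k - 4"
    "- int k < t + i" "t + i < int k - 4"
proof -
  define t\<^sub>0 where "t\<^sub>0 = x mod int k"
  have t\<^sub>0: "0 \<le> t\<^sub>0" "t\<^sub>0 < int k" using assms(1) unfolding t\<^sub>0_def by simp_all
  have i: "-4 \<le> i" "i \<le> 4" using assms(2) by auto
  have "t\<^sub>0 mod int k = x mod int k" "(t\<^sub>0 - int k) mod int k = x mod int k"
    unfolding t\<^sub>0_def by simp_all
  show ?thesis
  proof (cases "t\<^sub>0 < int k - 4 \<and> t\<^sub>0 + i < int k - 4")
    case True
    then show ?thesis using t\<^sub>0 i assms(1) \<open>t\<^sub>0 mod int k = x mod int k\<close>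
        \<open>(t\<^sub>0 - int k) mod int k = x mod int k\<close> by (intro that[of t\<^sub>0]; linarith)
  next
    case False
    then show ?thesis using t\<^sub>0 i assms(1) \<open>t\<^sub>0 mod int k = x mod int k\<close>
        \<open>(t\<^sub>0 - int k) mod int k = x mod int k\<close> by (intro that[of "t\<^sub>0 - int k"]; linarith)
  qed
qed

lemma pattern_B_separated_near_0:
  assumes "-4 \<le> s" "s \<le> 0" "\<bar>s - t\<bar> \<le> 4" "s \<noteq> t" and eq: "pattern_B p s = pattern_B p t"
  shows "int (pattern_B p s) < \<bar>s - t\<bar>"
proof -
  define d where "d = t - s"
  have "s = -4 \<or> s = -3 \<or> s = -2 \<or> s = -1 \<or> s = 0" using assms(1,2) by linarith
  moreover have "d = -4 \<or> d = -3 \<or> d = -2 \<or> d = -1 \<or> d = 1 \<or> d = 2 \<or> d = 3 \<or> d = 4"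
    using assms(3,4) unfolding d_def by linarith
  moreover have "p \<or> \<not> p" by simp
  moreover have "pattern_B p s = pattern_B p (s + d)" using eq unfolding d_def by simp
  ultimately have "int (pattern_B p s) < \<bar>d\<bar>"
    by (elim disjE) (simp_all add: pattern_B_def pattern_1213_def)
  then show ?thesis unfolding d_def by (simp add: abs_minus_commute)
qed

lemma pattern_B_separated:
  assumes eq: "pattern_B p s = pattern_B p t" and "s \<noteq> t"
  shows "int (pattern_B p s) < \<bar>s - t\<bar>"
proof -
  consider "5 \<le> \<bar>s - t\<bar>" | "\<bar>s - t\<bar> \<le> 4" "-4 \<le> s" "s \<le> 0"
    | "\<bar>s - t\<bar> \<le> 4" "-4 \<le> t" "t \<le> 0" | "1 \<le> s" "1 \<le> t" | "s \<le> -5" "t \<le> -5"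
    by linarith
  then show ?thesis
  proof cases
    case 1
    then show ?thesis using pattern_B_range[of p s] by simp
  next
    case 2
    then show ?thesis using pattern_B_separated_near_0 assms by blast
  next
    case 3
    then show ?thesis
      using pattern_B_separated_near_0[of t s p] assms by (simp add: abs_minus_commute)
  next
    case 4
    then show ?thesis
      using pattern_1213_separated[of "s + (if p then 3 else 0)" "t + (if p then 3 else 0)"] assms
      by (simp add: pattern_B_pos)
  next
    case 5
    then show ?thesis
      using pattern_1213_separated[of "s + (if p then 1 else 2)" "t + (if p then 1 else 2)"] assms
      by (simp add: pattern_B_neg)
  qed
qed

lemma pattern_B_next_copy:
  assumes "\<bar>s\<bar> = 1" "\<bar>i\<bar> + \<bar>j\<bar> \<le> 3" and eq: "pattern_B p (s + i) = pattern_B (\<not> p) (j - s)"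
  shows "int (pattern_B p (s + i)) < \<bar>i\<bar> + 1 + \<bar>j\<bar>"
proof -
  have "s = -1 \<or> s = 1" using assms(1) by linarith
  moreover have "i = -3 \<or> i = -2 \<or> i = -1 \<or> i = 0 \<or> i = 1 \<or> i = 2 \<or> i = 3"
    "j = -3 \<or> j = -2 \<or> j = -1 \<or> j = 0 \<or> j = 1 \<or> j = 2 \<or> j = 3"
    using assms(2) by linarith+
  moreover have "p \<or> \<not> p" by simp
  ultimately show ?thesis using eq assms(2)
    by (elim disjE) (simp_all add: pattern_B_def pattern_1213_def)
qed

lemma sier2_local_coloring_B:
  assumes k: "10 \<le> k" "k mod 4 = 2"
  shows "sier2_local_coloring k (color_B k)"
proof
  show "4 \<le> k" using k(1) by simp
  show "color_B k a b \<in> {1..4}" for a b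
    unfolding color_B_def by (rule pattern_B_range)
  show "int (color_B k a b) < \<bar>i\<bar>"
    if "a < k" "b < k" "b' < k" "b' \<noteq> b" and b': "int b' = (int b + i) mod int k"
      and "\<bar>i\<bar> \<le> 4" and eq: "color_B k a b = color_B k a b'" for a b b' i
  proof -
    have "i \<noteq> 0" using b' \<open>b < k\<close> \<open>b' \<noteq> b\<close> by auto
    have "9 \<le> k" using k(1) by simp
    obtain t where t: "t mod int k = (int b - int a) mod int k" "- int k < t" "t < int k - 4"
      "- int k < t + i" "t + i < int k - 4"
      using exists_offset_in_window[OF \<open>9 \<le> k\<close> \<open>\<bar>i\<bar> \<le> 4\<close>] by blast
    have "(int a + t) mod int k = (int a + (int b - int a)) mod int k"
      using t(1) by (metis mod_add_right_eq)
    also have "\<dots> = int b" using \<open>b < k\<close> by simp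
    finally have b: "int b = (int a + t) mod int k" ..
    then have "int b' = (int a + (t + i)) mod int k"
      using b' by (simp add: mod_add_left_eq add.assoc)
    then have "color_B k a b' = pattern_B (odd a) (t + i)"
      using color_B_offset[OF k(2)] t(4,5) by blast
    moreover have "color_B k a b = pattern_B (odd a) t"
      using color_B_offset[OF k(2) b] t(2,3) by blast
    ultimately show ?thesis using pattern_B_separated[of "odd a" t "t + i"] eq \<open>i \<noteq> 0\<close> by simp
  qed
  show "int (color_B k a b) < \<bar>i\<bar> + 1 + \<bar>j\<bar>"
    if lt: "a < k" "a' < k" "b < k" "b' < k" and s: "\<bar>s\<bar> = 1" "int a' = (int a + s) mod int k"
      and b: "int b = (int a + (s + i)) mod int k" and b': "int b' = (int a' + (j - s)) mod int k"
      and ij: "\<bar>i\<bar> + \<bar>j\<bar> \<le> 3" and eq: "color_B k a b = color_B k a' b'" for a a' b b' s i j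
  proof -
    have "odd a' \<longleftrightarrow> \<not> odd a" using odd_iff_even_neighbour[OF _ s(2,1)] k(2) by presburger
    moreover have "color_B k a b = pattern_B (odd a) (s + i)"
      "color_B k a' b' = pattern_B (odd a') (j - s)"
      using color_B_offset[OF k(2) b] color_B_offset[OF k(2) b'] s(1) ij k(1) by linarith+
    ultimately show ?thesis using pattern_B_next_copy[OF s(1) ij, of "odd a"] eq by simp
  qed
  show "color_B k a (cyc_succ k a) \<le> 3 \<and> color_B k a (cyc_pred k a) \<le> 3" if "a < k" for a
  proof -
    have "color_B k a (cyc_succ k a) = pattern_B (odd a) 1"
      using color_B_offset[OF k(2) int_cyc_succ[OF that]] k(1) by simp
    moreover have "color_B k a (cyc_pred k a) = pattern_B (odd a) (-1)"
      using color_B_offset[OF k(2), of "cyc_pred k a" a "-1"] int_cyc_pred[OF that] k(1) by simp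
    ultimately show ?thesis by (simp add: pattern_B_def pattern_1213_def)
  qed
qed

section \<open>Three colors do not suffice\<close>

lemma sier2_packing_coloring_ge_4:
  assumes k: "4 \<le> k"
    and f: "packing_coloring (sierpinski_V k 2) (sierpinski_adj (cycle_adj k)) c f"
  shows "4 \<le> c"
proof (rule ccontr)
  assume "\<not> 4 \<le> c"
  let ?V = "sierpinski_V k 2" and ?E = "sierpinski_adj (cycle_adj k)"
  have V: "[a, b] \<in> ?V" if "a \<le> 3" "b \<le> 3" for a b
    using that k unfolding sierpinski_V_2_iff by auto
  have in_copy: "?E [a, b] [a, Suc b]" if "a \<le> 3" "b < 3" for a b
    using that k unfolding sier2_adj_iff cycle_adj_def by auto
  have bridge: "?E [1, 2] [2, 1]"
    using k unfolding sier2_adj_iff cycle_adj_def by auto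
  have edges: "?E [1, 0] [1, 1]" "?E [1, 1] [1, 2]" "?E [1, 2] [1, 3]" "?E [1, 2] [2, 1]"
    "?E [2, 0] [2, 1]" "?E [2, 1] [2, 2]" "?E [2, 2] [2, 3]"
    using in_copy[of 1 0] in_copy[of 1 1] in_copy[of 1 2] in_copy[of 2 0] in_copy[of 2 1]
      in_copy[of 2 2] bridge
    by (simp_all add: numeral_eq_Suc)
  note E = edges edges[THEN sier2_adj_sym]
  have color: "f v \<in> {1, 2, 3}" if "v \<in> ?V" for v
    using f that \<open>\<not> 4 \<le> c\<close> unfolding packing_coloring_def by fastforce
  have walk_bound: "f (hd p) = f (last p) \<Longrightarrow> f (hd p) < length p - 1"
    if "walk ?V ?E p" "hd p \<noteq> last p" for p
    using packing_coloring_walk[OF f that] by blast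
  have dist1: "f u \<noteq> f v" if "?E u v" "u \<in> ?V" "v \<in> ?V" "u \<noteq> v" for u v
    using walk_bound[of "[u, v]"] that color[of u] by force
  have dist2: "f u = f v \<Longrightarrow> f u = 1"
    if "?E u w" "?E w v" "u \<in> ?V" "w \<in> ?V" "v \<in> ?V" "u \<noteq> v" for u v w
    using walk_bound[of "[u, w, v]"] that color[of u] by force
  have dist3: "f u = f v \<Longrightarrow> f u \<le> 2"
    if "?E u w" "?E w z" "?E z v" "u \<in> ?V" "w \<in> ?V" "z \<in> ?V" "v \<in> ?V" "u \<noteq> v" for u v w z
    using walk_bound[of "[u, w, z, v]"] that by force
  have adjacent: "f [1,0] \<noteq> f [1,1]" "f [1,1] \<noteq> f [1,2]" "f [1,2] \<noteq> f [1,3]" "f [1,2] \<noteq> f [2,1]"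
    "f [2,0] \<noteq> f [2,1]" "f [2,1] \<noteq> f [2,2]" "f [2,2] \<noteq> f [2,3]"
    by (rule dist1; (rule E V)?; simp)+
  have two_apart:
    "f [1,0] = f [1,2] \<Longrightarrow> f [1,0] = 1" "f [1,1] = f [1,3] \<Longrightarrow> f [1,1] = 1"
    "f [1,1] = f [2,1] \<Longrightarrow> f [1,1] = 1" "f [1,3] = f [2,1] \<Longrightarrow> f [1,3] = 1"
    "f [1,2] = f [2,0] \<Longrightarrow> f [1,2] = 1" "f [1,2] = f [2,2] \<Longrightarrow> f [1,2] = 1"
    "f [2,0] = f [2,2] \<Longrightarrow> f [2,0] = 1" "f [2,1] = f [2,3] \<Longrightarrow> f [2,1] = 1"
    by (rule dist2[of _ "[1,1]"] dist2[of _ "[1,2]"] dist2[of _ "[2,1]"] dist2[of _ "[2,2]"];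
        (rule E V)?; simp)+
  have three_apart: "f [1,0] = f [2,1] \<Longrightarrow> f [1,0] \<le> 2" "f [1,2] = f [2,3] \<Longrightarrow> f [1,2] \<le> 2"
    by (rule dist3[of _ "[1,1]" "[1,2]"] dist3[of _ "[2,1]" "[2,2]"]; (rule E V)?; simp)+
  have range: "f [1,0] \<in> {1,2,3}" "f [1,1] \<in> {1,2,3}" "f [1,2] \<in> {1,2,3}" "f [1,3] \<in> {1,2,3}"
    "f [2,0] \<in> {1,2,3}" "f [2,1] \<in> {1,2,3}" "f [2,2] \<in> {1,2,3}" "f [2,3] \<in> {1,2,3}"
    by (intro color V; simp)+
  txt \<open>
    The bridge ends \<open>[1, 2]\<close> and \<open>[2, 1]\<close> cannot have color 1, since each has three
    neighbours at pairwise distance 2; the two remaining cases are blocked by \<open>[1, 0]\<close>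
    and by \<open>[2, 3]\<close>.
  \<close>
  consider "f [1,2] = 1" | "f [2,1] = 1" | "f [1,2] = 2" "f [2,1] = 3" | "f [1,2] = 3" "f [2,1] = 2"
    using adjacent(4) range(3,6) by fastforce
  then show False
  proof cases
    case 1
    then show False using adjacent(2,3,4) two_apart(2,3,4) range(2,4,6) by auto
  next
    case 2
    then show False using adjacent(4,5,6) two_apart(5,6,7) range(3,5,7) by auto
  next
    case 3
    then have "f [1,1] = 1" using adjacent(2) two_apart(3) range(2) by auto
    then show False using 3 adjacent(1) two_apart(1) three_apart(1) range(1) by auto
  next
    case 4
    then have "f [2,2] = 1" using adjacent(6) two_apart(6) range(7) by auto
    then show False using 4 adjacent(7) two_apart(8) three_apart(2) range(8) by auto
  qed
qed

theorem proposition4: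
  fixes k :: nat
  assumes "k \<ge> 3"
    and "(k \<ge> 10 \<and> even k) \<or> k mod 4 = 0"
  shows "packing_chromatic_number (sierpinski_V k 2) (sierpinski_adj (cycle_adj k)) = 4"
proof -
  have k: "4 \<le> k" using assms by presburger
  have "\<exists>f. packing_coloring (sierpinski_V k 2) (sierpinski_adj (cycle_adj k)) 4 f"
  proof (cases "4 dvd k")
    case True
    then show ?thesis
      using sier2_local_coloring.packing_4_coloring[OF sier2_local_coloring_A[OF k True]] by blast
  next
    case False
    then have "10 \<le> k" "k mod 4 = 2" using assms by presburger+
    then show ?thesis
      using sier2_local_coloring.packing_4_coloring[OF sier2_local_coloring_B] by blast
  qed
  then show ?thesis
    unfolding packing_chromatic_number_def
    by (rule Least_equality) (use sier2_packing_coloring_ge_4[OF k] in blast)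
qed

end
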